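(* Let $G=(M,W,\Pi)$ be a many-to-many matching game with additive externalities. Any matching $\mathcal{A}$ in the optimistic stable set of $G$ is the union of two disjoint matchings, one on agent sets $(M',W')$ and one on $(M'',W'')$, where $M'\cup M''=M$ and $W'\cup W''=W$, such that every agent in $M'\cup W'$ obtains in $\mathcal{A}$ its highest possible utility, while the matching on $(M'',W'')$ is the empty matching.
   Context: Agents: $N=M\cup W$ with $M,W$ disjoint finite sets. A match is a pair $(m,w)$ with $m\in M$, $w\in W$; a (many-to-many) matching is any set of matches; the empty matching contains no matches. Forming a match requires consent of both endpoints; severing can be done unilaterally by either endpoint. A matching game with additive externalities is $G=(M,W,\Pi)$ where $\Pi(m,w\mid z)\in\mathbb{R}$ is the value agent $z$ receives from the formation of match $(m,w)$; utility is $u(z,\mathcal{A})=\sum_{(m,w)\in\mathcal{A}}\Pi(m,w\mid z)$. A coalition $B\subseteq N$ blocks $\mathcal{A}$ if, by rearranging matches among its members and deleting a (possibly empty) subset of its members' matches with agents in $N\setminus B$, with every member of $B$ performing at least one action (severing a match or forming a new match with another member of $B$), it makes at least one member strictly better off and no member worse off. Under optimistic reasoning, each member $i\in B$ evaluates a deviation assuming the agents in $N\setminus B$ organize themselves in the best possible way for $i$: they cut every match with a negative influence on $i$ and form every match with a positive influence on $i$ (including initiating matches with $i$ as an endpoint). A matching is in the optimistic stable set if no coalition blocks it under optimistic reasoning. *)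

theory Defs
  imports Complex_Main
begin

text \<open>Agents have type 'a; M and W are disjoint finite sets of agents.
  Pi m w z is the value agent z receives from the formation of match (m,w).\<close>

definition is_matching :: "'a set \<Rightarrow> 'a set \<Rightarrow> ('a \<times> 'a) set \<Rightarrow> bool" where
  "is_matching M W A \<longleftrightarrow> A \<subseteq> M \<times> W"

definition util :: "('a \<Rightarrow> 'a \<Rightarrow> 'a \<Rightarrow> real) \<Rightarrow> 'a \<Rightarrow> ('a \<times> 'a) set \<Rightarrow> real" where
  "util Pi z A = (\<Sum>(m, w)\<in>A. Pi m w z)"

definition max_util :: "'a set \<Rightarrow> 'a set \<Rightarrow> ('a \<Rightarrow> 'a \<Rightarrow> 'a \<Rightarrow> real) \<Rightarrow> 'a \<Rightarrow> real" where
  "max_util M W Pi z = Max {util Pi z X | X. is_matching M W X}"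

text \<open>Deviation of coalition B from A: delete matches D of A involving a member of B,
  form new matches F between members of B.  Result: (A - D) \<union> F.\<close>
definition valid_deviation ::
  "'a set \<Rightarrow> 'a set \<Rightarrow> ('a \<times> 'a) set \<Rightarrow> 'a set \<Rightarrow> ('a \<times> 'a) set \<Rightarrow> ('a \<times> 'a) set \<Rightarrow> bool" where
  "valid_deviation M W A B D F \<longleftrightarrow>
     B \<subseteq> M \<union> W \<and>
     D \<subseteq> {(m, w) \<in> A. m \<in> B \<or> w \<in> B} \<and>
     F \<subseteq> {(m, w) \<in> M \<times> W. m \<in> B \<and> w \<in> B} \<and> F \<inter> A = {} \<and>
     (\<forall>i\<in>B. \<exists>(m, w)\<in>D \<union> F. i = m \<or> i = w)"

text \<open>Optimistic response of the outsiders N - B to the deviated matching A1, from the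
  point of view of member i of B: matches among members of B are as in A1; matches that
  the outsiders can organise (both endpoints outside B, or one endpoint outside B and the
  other i) are present iff they have a positive influence on i (a zero-influence match is
  kept if present); matches between an outsider and a member j \<noteq> i of B can only be cut
  by the outsider, so they are kept iff they are in A1 and not negative for i.\<close>
definition optimistic_response ::
  "'a set \<Rightarrow> 'a set \<Rightarrow> ('a \<Rightarrow> 'a \<Rightarrow> 'a \<Rightarrow> real) \<Rightarrow> 'a set \<Rightarrow> ('a \<times> 'a) set \<Rightarrow> 'a \<Rightarrow> ('a \<times> 'a) set" where
  "optimistic_response M W Pi B A1 i =
     {(m, w) \<in> A1. m \<in> B \<and> w \<in> B}
   \<union> {(m, w) \<in> M \<times> W. \<not> (m \<in> B \<and> w \<in> B) \<and> (m = i \<or> w = i \<or> (m \<notin> B \<and> w \<notin> B)) \<and>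
        (Pi m w i > 0 \<or> ((m, w) \<in> A1 \<and> Pi m w i = 0))}
   \<union> {(m, w) \<in> A1. \<not> (m \<in> B \<and> w \<in> B) \<and> \<not> (m = i \<or> w = i \<or> (m \<notin> B \<and> w \<notin> B)) \<and>
        Pi m w i \<ge> 0}"

definition optimistic_blocks ::
  "'a set \<Rightarrow> 'a set \<Rightarrow> ('a \<Rightarrow> 'a \<Rightarrow> 'a \<Rightarrow> real) \<Rightarrow> ('a \<times> 'a) set \<Rightarrow> 'a set \<Rightarrow> bool" where
  "optimistic_blocks M W Pi A B \<longleftrightarrow>
     (\<exists>D F. valid_deviation M W A B D F \<and>
        (let A1 = (A - D) \<union> F in
          (\<forall>i\<in>B. util Pi i (optimistic_response M W Pi B A1 i) \<ge> util Pi i A) \<and>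
          (\<exists>i\<in>B. util Pi i (optimistic_response M W Pi B A1 i) > util Pi i A)))"

definition optimistic_stable_set ::
  "'a set \<Rightarrow> 'a set \<Rightarrow> ('a \<Rightarrow> 'a \<Rightarrow> 'a \<Rightarrow> real) \<Rightarrow> ('a \<times> 'a) set set" where
  "optimistic_stable_set M W Pi =
     {A. is_matching M W A \<and> (\<forall>B. \<not> optimistic_blocks M W Pi A B)}"

end

theory Submission
  imports Defs
begin

text \<open>An agent z that is matched in A can sever one of its matches on its own. Under optimistic
  reasoning the outsiders then form every match that is positive for z and cut every negative
  one, so z expects the sum of all its positive values, which is exactly its highest possible
  utility. Stability forbids this deviation from being profitable, so every matched agent
  already attains its maximum; the unmatched agents form the part carrying the empty matching.\<close>

lemma sum_le_sum_positive_part: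
  fixes f :: "'b \<Rightarrow> real"
  assumes "finite S" and "X \<subseteq> S"
  shows "sum f X \<le> sum f {p\<in>S. f p > 0}"
proof -
  have "finite X" using assms finite_subset by blast
  then have "sum f X = sum f (X \<inter> {p. f p > 0}) + sum f (X - {p. f p > 0})"
    by (metis Diff_eq sum.Int_Diff)
  also have "sum f (X - {p. f p > 0}) \<le> 0" by (intro sum_nonpos) auto
  also have "sum f (X \<inter> {p. f p > 0}) \<le> sum f {p\<in>S. f p > 0}"
    by (rule sum_mono2) (use assms in auto)
  finally show ?thesis by simp
qed

definition positive_matches :: "'a set \<Rightarrow> 'a set \<Rightarrow> ('a \<Rightarrow> 'a \<Rightarrow> 'a \<Rightarrow> real) \<Rightarrow> 'a \<Rightarrow> ('a \<times> 'a) set" where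
  "positive_matches M W Pi z = {(m, w) \<in> M \<times> W. Pi m w z > 0}"

lemma util_le_util_positive_matches:
  assumes "finite M" and "finite W" and "is_matching M W X"
  shows "util Pi z X \<le> util Pi z (positive_matches M W Pi z)"
proof -
  define f where "f = (\<lambda>(m, w). Pi m w z)"
  have "sum f X \<le> sum f {p\<in>M \<times> W. f p > 0}"
    using assms by (intro sum_le_sum_positive_part) (auto simp: is_matching_def)
  moreover have "{p\<in>M \<times> W. f p > 0} = positive_matches M W Pi z"
    unfolding positive_matches_def f_def by auto
  ultimately show ?thesis unfolding util_def f_def by simp
qed

lemma max_util_eq_util_positive_matches:
  assumes "finite M" and "finite W"
  shows "max_util M W Pi z = util Pi z (positive_matches M W Pi z)"
  unfolding max_util_def
proof (rule Max_eqI)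
  have "{util Pi z X | X. is_matching M W X} \<subseteq> (\<lambda>X. util Pi z X) ` Pow (M \<times> W)"
    unfolding is_matching_def by auto
  then show "finite {util Pi z X | X. is_matching M W X}"
    using assms by (meson finite_Pow_iff finite_SigmaI finite_imageI finite_subset)
  show "util Pi z (positive_matches M W Pi z) \<in> {util Pi z X | X. is_matching M W X}"
    unfolding is_matching_def positive_matches_def by auto
  show "a \<le> util Pi z (positive_matches M W Pi z)" if "a \<in> {util Pi z X | X. is_matching M W X}" for a
    using that util_le_util_positive_matches[OF assms] by blast
qed

text \<open>Disjointness of M and W rules out a match with both endpoints equal to z: such a match would
  lie inside the coalition {z}, where the outsiders cannot form it.\<close>

lemma max_util_le_util_optimistic_response_singleton:
  assumes "finite M" and "finite W" and "M \<inter> W = {}" and "A1 \<subseteq> M \<times> W"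
  shows "max_util M W Pi z \<le> util Pi z (optimistic_response M W Pi {z} A1 z)"
proof -
  define R where "R = optimistic_response M W Pi {z} A1 z"
  define f where "f = (\<lambda>(m, w). Pi m w z)"
  have R_sub: "R \<subseteq> M \<times> W"
    using assms(4) unfolding R_def optimistic_response_def by auto
  have P_sub: "positive_matches M W Pi z \<subseteq> R"
  proof
    fix q assume "q \<in> positive_matches M W Pi z"
    then obtain m w where q: "q = (m, w)" "m \<in> M" "w \<in> W" "Pi m w z > 0"
      unfolding positive_matches_def by auto
    have "m \<noteq> w" using q assms(3) by auto
    then show "q \<in> R" unfolding R_def optimistic_response_def using q by auto
  qed
  have R_nonneg: "f q \<ge> 0" if "q \<in> R" for q
  proof -
    obtain m w where q: "q = (m, w)" by (cases q)
    have "m \<noteq> w" using that q R_sub assms(3) by auto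
    then show ?thesis using that unfolding R_def optimistic_response_def f_def q by auto
  qed
  have "finite R"
    using R_sub assms(1,2) finite_subset by blast
  then have "sum f (positive_matches M W Pi z) \<le> sum f R"
    using P_sub R_nonneg by (intro sum_mono2) auto
  then show ?thesis
    using max_util_eq_util_positive_matches[OF assms(1,2)]
    unfolding R_def util_def f_def by simp
qed

lemma valid_deviation_sever_match:
  assumes "A \<subseteq> M \<times> W" and "(m, w) \<in> A" and "z = m \<or> z = w"
  shows "valid_deviation M W A {z} {(m, w)} {}"
  using assms unfolding valid_deviation_def by auto

lemma optimistic_stable_matched_agent_max_util:
  assumes "finite M" and "finite W" and "M \<inter> W = {}"
    and "A \<in> optimistic_stable_set M W Pi" and "z \<in> fst ` A \<union> snd ` A"
  shows "util Pi z A = max_util M W Pi z"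
proof -
  have A_sub: "A \<subseteq> M \<times> W" and not_blocked: "\<not> optimistic_blocks M W Pi A {z}"
    using assms(4) unfolding optimistic_stable_set_def is_matching_def by auto
  obtain m w where mw: "(m, w) \<in> A" and z: "z = m \<or> z = w"
    using assms(5) by force
  define A1 where "A1 = (A - {(m, w)}) \<union> {}"
  have le: "util Pi z A \<le> max_util M W Pi z"
    using A_sub assms(1,2) unfolding max_util_eq_util_positive_matches[OF assms(1,2)]
    by (intro util_le_util_positive_matches) (auto simp: is_matching_def)
  have "max_util M W Pi z \<le> util Pi z (optimistic_response M W Pi {z} A1 z)"
    using A_sub assms(1-3) unfolding A1_def
    by (intro max_util_le_util_optimistic_response_singleton) auto
  moreover have "\<not> util Pi z A < util Pi z (optimistic_response M W Pi {z} A1 z)"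
  proof
    assume "util Pi z A < util Pi z (optimistic_response M W Pi {z} A1 z)"
    then have "optimistic_blocks M W Pi A {z}"
      unfolding optimistic_blocks_def Let_def A1_def
      using valid_deviation_sever_match[OF A_sub mw z]
      by (intro exI[of _ "{(m, w)}"] exI[of _ "{}"]) simp
    with not_blocked show False ..
  qed
  ultimately show ?thesis using le by linarith
qed

theorem theorem6:
  fixes M W :: "'a set" and Pi :: "'a \<Rightarrow> 'a \<Rightarrow> 'a \<Rightarrow> real" and A :: "('a \<times> 'a) set"
  assumes "finite M" and "finite W" and "M \<inter> W = {}"
    and "A \<in> optimistic_stable_set M W Pi"
  shows "\<exists>M' M'' W' W''. M' \<union> M'' = M \<and> M' \<inter> M'' = {} \<and> W' \<union> W'' = W \<and> W' \<inter> W'' = {} \<and>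
           (\<exists>A' A''. A = A' \<union> A'' \<and> A' \<inter> A'' = {} \<and>
              is_matching M' W' A' \<and> is_matching M'' W'' A'' \<and> A'' = {}) \<and>
           (\<forall>z\<in>M' \<union> W'. util Pi z A = max_util M W Pi z)"
proof -
  have A_sub: "A \<subseteq> M \<times> W"
    using assms(4) unfolding optimistic_stable_set_def is_matching_def by auto
  show ?thesis
  proof (intro exI conjI)
    show "fst ` A \<union> (M - fst ` A) = M" and "snd ` A \<union> (W - snd ` A) = W"
      using A_sub by auto
    show "is_matching (fst ` A) (snd ` A) A"
      unfolding is_matching_def by force
    show "\<forall>z\<in>fst ` A \<union> snd ` A. util Pi z A = max_util M W Pi z"
      using optimistic_stable_matched_agent_max_util[OF assms] by blast
  qed (auto simp: is_matching_def)
qed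

end
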